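(* Every digraph $D$ with minimum dicut size $2$ contains $2$ arc-disjoint dijoins.
   Context: Digraphs are finite and loopless; parallel arcs allowed. A dicut is $\delta^+_D(U)$ (arcs leaving $U$) with $\emptyset\neq U\subsetneq V$ and no arc entering $U$; a dijoin is an arc set meeting every dicut; "$D$ has minimum dicut size $\tau$" means $D$ has at least one dicut and the minimum number of arcs in a dicut is $\tau$. *)

theory Defs
  imports "Graph_Theory.Digraph"
begin

text \<open>Digraphs are finite, loopless, parallel arcs allowed: fin_digraph + loopfree_digraph
  from Graph_Theory (arcs are abstract objects with tail/head).\<close>

definition out_cut :: "('a,'b) pre_digraph \<Rightarrow> 'a set \<Rightarrow> 'b set" where
  "out_cut G U = {e \<in> arcs G. tail G e \<in> U \<and> head G e \<notin> U}"

definition is_dicut :: "('a,'b) pre_digraph \<Rightarrow> 'b set \<Rightarrow> bool" where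
  "is_dicut G C \<longleftrightarrow> (\<exists>U. U \<noteq> {} \<and> U \<subset> verts G
      \<and> (\<forall>e \<in> arcs G. \<not> (tail G e \<notin> U \<and> head G e \<in> U))
      \<and> C = out_cut G U)"

definition is_dijoin :: "('a,'b) pre_digraph \<Rightarrow> 'b set \<Rightarrow> bool" where
  "is_dijoin G J \<longleftrightarrow> J \<subseteq> arcs G \<and> (\<forall>C. is_dicut G C \<longrightarrow> J \<inter> C \<noteq> {})"

definition min_dicut_size :: "('a,'b) pre_digraph \<Rightarrow> nat \<Rightarrow> bool" where
  "min_dicut_size G \<tau> \<longleftrightarrow> (\<exists>C. is_dicut G C \<and> card C = \<tau>)
      \<and> (\<forall>C. is_dicut G C \<longrightarrow> \<tau> \<le> card C)"

end

theory Submission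
  imports Defs
begin

text \<open>
  A cut of the underlying multigraph crossed by at most one arc yields, on one of its two sides,
  a dicut with at most one arc; so minimum dicut size 2 makes the underlying multigraph
  2-edge-connected. By Robbins' theorem it then has a strongly connected orientation, obtained
  by reversing some arc set B. Every dicut of D is crossed in both directions after the
  reversal, so it contains an arc of B and an arc outside B: B and its complement are disjoint
  dijoins.

  Robbins' theorem for multigraphs is proved by induction. An arc whose deletion keeps
  2-edge-connectivity is deleted. Otherwise every arc lies in a cut of exactly two arcs, and
  uncrossing such tight sets shows that a smallest one is a single vertex x. Contracting one of
  the two arcs at x keeps 2-edge-connectivity, and a strong orientation of the contraction lifts
  by orienting the two arcs at x as a directed path.
\<close>

section \<open>Cuts of the underlying multigraph\<close>

definition cut_arcs :: "('a,'b) pre_digraph \<Rightarrow> 'a set \<Rightarrow> 'b set" where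
  "cut_arcs G U = {e \<in> arcs G. (tail G e \<in> U) \<noteq> (head G e \<in> U)}"

definition two_edge_connected :: "('a,'b) pre_digraph \<Rightarrow> bool" where
  "two_edge_connected G \<longleftrightarrow> (\<forall>U. U \<noteq> {} \<and> U \<subset> verts G \<longrightarrow> 2 \<le> card (cut_arcs G U))"

definition tight_set :: "('a,'b) pre_digraph \<Rightarrow> 'a set \<Rightarrow> bool" where
  "tight_set G U \<longleftrightarrow> U \<noteq> {} \<and> U \<subset> verts G \<and> card (cut_arcs G U) = 2"

lemma finite_cut_arcs: "finite (arcs G) \<Longrightarrow> finite (cut_arcs G U)"
  unfolding cut_arcs_def by simp

lemma out_cut_subset_cut_arcs: "out_cut G U \<subseteq> cut_arcs G U"
  unfolding out_cut_def cut_arcs_def by auto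

lemma card_add_le_card_add:
  assumes "finite C" "finite D" "A \<union> B \<subseteq> C \<union> D" "A \<inter> B \<subseteq> C \<inter> D"
  shows "card A + card B \<le> card C + card D"
proof -
  have "finite A" "finite B"
    using assms by (meson finite_Un finite_subset le_sup_iff)+
  then have "card A + card B = card (A \<union> B) + card (A \<inter> B)"
    by (rule card_Un_Int)
  also have "\<dots> \<le> card (C \<union> D) + card (C \<inter> D)"
    using assms by (intro add_mono card_mono) auto
  also have "\<dots> = card C + card D"
    using assms by (metis card_Un_Int)
  finally show ?thesis .
qed

lemma card_cut_arcs_Int_Un:
  assumes "finite (arcs G)"
  shows "card (cut_arcs G (U \<inter> X)) + card (cut_arcs G (U \<union> X))
    \<le> card (cut_arcs G U) + card (cut_arcs G X)"
  using assms by (intro card_add_le_card_add finite_cut_arcs) (auto simp: cut_arcs_def)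

lemma card_cut_arcs_Diff:
  assumes "finite (arcs G)"
  shows "card (cut_arcs G (U - X)) + card (cut_arcs G (X - U))
    \<le> card (cut_arcs G U) + card (cut_arcs G X)"
  using assms by (intro card_add_le_card_add finite_cut_arcs) (auto simp: cut_arcs_def)

lemma tight_set_Int:
  assumes "finite (arcs G)" "two_edge_connected G" "tight_set G U" "tight_set G X"
    and "U \<inter> X \<noteq> {}" "U \<union> X \<noteq> verts G"
  shows "tight_set G (U \<inter> X)"
proof -
  have proper: "U \<inter> X \<subset> verts G" "U \<union> X \<subset> verts G"
    using assms(3-6) unfolding tight_set_def by auto
  then have "2 \<le> card (cut_arcs G (U \<inter> X))" "2 \<le> card (cut_arcs G (U \<union> X))"
    using assms(2,5) unfolding two_edge_connected_def by auto
  with card_cut_arcs_Int_Un[OF assms(1), of U X] assms(3,4,5) proper show ?thesis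
    unfolding tight_set_def by auto
qed

lemma tight_set_Diff:
  assumes "finite (arcs G)" "two_edge_connected G" "tight_set G U" "tight_set G X"
    and "U - X \<noteq> {}" "X - U \<noteq> {}"
  shows "tight_set G (U - X)"
proof -
  have proper: "U - X \<subset> verts G" "X - U \<subset> verts G"
    using assms(3-6) unfolding tight_set_def by auto
  then have "2 \<le> card (cut_arcs G (U - X))" "2 \<le> card (cut_arcs G (X - U))"
    using assms(2,5,6) unfolding two_edge_connected_def by auto
  with card_cut_arcs_Diff[OF assms(1), of U X] assms(3,4,5) proper show ?thesis
    unfolding tight_set_def by auto
qed

lemma tight_set_has_inner_arc:
  assumes "finite (arcs G)" "two_edge_connected G" "tight_set G U" "2 \<le> card U"
  shows "\<exists>g\<in>arcs G. tail G g \<in> U \<and> head G g \<in> U"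
proof (rule ccontr)
  assume no_inner: "\<not> ?thesis"
  have singleton_cut: "cut_arcs G {u} = cut_arcs G U" if "u \<in> U" for u
  proof (rule card_seteq)
    show "finite (cut_arcs G U)" using assms(1) by (rule finite_cut_arcs)
    show "cut_arcs G {u} \<subseteq> cut_arcs G U"
      using no_inner that unfolding cut_arcs_def by auto
    have "{u} \<subset> verts G" using that assms(3) unfolding tight_set_def by auto
    then show "card (cut_arcs G U) \<le> card (cut_arcs G {u})"
      using assms(2,3) unfolding two_edge_connected_def tight_set_def by auto
  qed
  obtain u1 u2 where u: "u1 \<in> U" "u2 \<in> U" "u1 \<noteq> u2"
    using assms(4) card_le_Suc0_iff_eq[of U] card.infinite[of U] by fastforce
  obtain e where "e \<in> cut_arcs G U"
    using assms(3) unfolding tight_set_def by fastforce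
  then have "e \<in> cut_arcs G {u1}" "e \<in> cut_arcs G {u2}"
    using singleton_cut u by auto
  then show False using no_inner u unfolding cut_arcs_def by auto
qed

lemma ex_tight_set_if_tight_cuts_cover:
  assumes "two_edge_connected G" "2 \<le> card (verts G)"
    and cover: "\<forall>e\<in>arcs G. \<exists>X. tight_set G X \<and> e \<in> cut_arcs G X"
  shows "\<exists>U. tight_set G U"
proof -
  obtain v where "v \<in> verts G" using assms(2) by fastforce
  moreover have "verts G \<noteq> {v}" using assms(2) by auto
  ultimately have "{v} \<subset> verts G" by blast
  then have "2 \<le> card (cut_arcs G {v})" using assms(1) unfolding two_edge_connected_def by blast
  then obtain e where "e \<in> cut_arcs G {v}" by fastforce
  then show ?thesis using cover unfolding cut_arcs_def by blast
qed

text \<open>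
  A smallest tight set U is a singleton: otherwise some arc g inside U lies in a tight set X, and
  uncrossing U with X gives the smaller tight set U \<inter> X or U - X.
\<close>

lemma tight_set_singleton_if_tight_cuts_cover:
  assumes "fin_digraph G" "two_edge_connected G" "2 \<le> card (verts G)"
    and cover: "\<forall>e\<in>arcs G. \<exists>X. tight_set G X \<and> e \<in> cut_arcs G X"
  shows "\<exists>x. tight_set G {x}"
proof -
  interpret fin_digraph G by fact
  obtain U0 where "tight_set G U0"
    using ex_tight_set_if_tight_cuts_cover[OF assms(2,3) cover] by blast
  then obtain U where U: "tight_set G U" and min: "\<And>X. tight_set G X \<Longrightarrow> card U \<le> card X"
    using ex_has_least_nat[of "tight_set G" U0 card] by metis
  have fin_U: "finite U" using U finite_verts finite_subset unfolding tight_set_def by blast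
  have "card U \<noteq> 0" using U fin_U unfolding tight_set_def by simp
  moreover have "\<not> 2 \<le> card U"
  proof
    assume "2 \<le> card U"
    then obtain g where g: "g \<in> arcs G" "tail G g \<in> U" "head G g \<in> U"
      using tight_set_has_inner_arc[OF finite_arcs assms(2) U] by blast
    then obtain X where X: "tight_set G X" "g \<in> cut_arcs G X" using cover by blast
    have meet: "U \<inter> X \<noteq> {}" and "U - X \<noteq> {}"
      using g X(2) unfolding cut_arcs_def by auto
    show False
    proof (cases "U \<union> X = verts G")
      case False
      with meet have "tight_set G (U \<inter> X)" by (intro tight_set_Int assms(2) U X(1)) simp_all
      moreover have "card (U \<inter> X) < card U"
        using \<open>U - X \<noteq> {}\<close> fin_U by (intro psubset_card_mono) auto
      ultimately show False using min by fastforce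
    next
      case True
      then have "X - U \<noteq> {}" using U unfolding tight_set_def by auto
      with \<open>U - X \<noteq> {}\<close> have "tight_set G (U - X)" by (intro tight_set_Diff assms(2) U X(1)) simp_all
      moreover have "card (U - X) < card U"
        using meet fin_U by (intro psubset_card_mono) auto
      ultimately show False using min by fastforce
    qed
  qed
  ultimately have "card U = 1" by linarith
  then show ?thesis using U by (metis card_1_singletonE)
qed

lemma tight_set_through_arc:
  assumes "finite (arcs G)" "two_edge_connected G" "\<not> two_edge_connected (pre_digraph.del_arc G e)"
  shows "\<exists>X. tight_set G X \<and> e \<in> cut_arcs G X"
proof -
  obtain X where X: "X \<noteq> {}" "X \<subset> verts G" "card (cut_arcs (pre_digraph.del_arc G e) X) < 2"
    using assms(3) unfolding two_edge_connected_def pre_digraph.del_arc_simps by (meson not_le)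
  have del: "cut_arcs (pre_digraph.del_arc G e) X = cut_arcs G X - {e}"
    unfolding cut_arcs_def pre_digraph.del_arc_simps by auto
  have "2 \<le> card (cut_arcs G X)" using assms(2) X unfolding two_edge_connected_def by blast
  moreover have "finite (cut_arcs G X)" using assms(1) by (rule finite_cut_arcs)
  ultimately have "e \<in> cut_arcs G X"
    using X(3) unfolding del by (metis Diff_empty Diff_insert0 not_le)
  with \<open>finite (cut_arcs G X)\<close> have "card (cut_arcs G X) = 2"
    using X(3) \<open>2 \<le> card (cut_arcs G X)\<close> unfolding del by simp
  with X \<open>e \<in> cut_arcs G X\<close> show ?thesis unfolding tight_set_def by blast
qed

section \<open>Reversing arcs and contracting a vertex\<close>

definition reverse_arcs :: "('a,'b) pre_digraph \<Rightarrow> 'b set \<Rightarrow> ('a,'b) pre_digraph" where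
  "reverse_arcs G B = G\<lparr>tail := \<lambda>e. if e \<in> B then head G e else tail G e,
                        head := \<lambda>e. if e \<in> B then tail G e else head G e\<rparr>"

lemma reverse_arcs_simps [simp]:
  "verts (reverse_arcs G B) = verts G"
  "arcs (reverse_arcs G B) = arcs G"
  "tail (reverse_arcs G B) e = (if e \<in> B then head G e else tail G e)"
  "head (reverse_arcs G B) e = (if e \<in> B then tail G e else head G e)"
  unfolding reverse_arcs_def by simp_all

lemma wf_digraph_reverse_arcs: "wf_digraph G \<Longrightarrow> wf_digraph (reverse_arcs G B)"
  unfolding wf_digraph_def by auto

lemma cut_arcs_reverse_arcs [simp]: "cut_arcs (reverse_arcs G B) U = cut_arcs G U"
  unfolding cut_arcs_def by auto

lemma out_cut_reverse_arcs:
  assumes "wf_digraph G"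
  shows "out_cut (reverse_arcs G B) U = (out_cut G U - B) \<union> (B \<inter> out_cut G (verts G - U))"
  using wf_digraph.wellformed[OF assms] unfolding out_cut_def by auto

definition contract_vertex :: "('a,'b) pre_digraph \<Rightarrow> 'a \<Rightarrow> 'a \<Rightarrow> ('a,'b) pre_digraph" where
  "contract_vertex G x a =
    \<lparr>verts = verts G - {x},
     arcs = {e \<in> arcs G. (id(x := a)) (tail G e) \<noteq> (id(x := a)) (head G e)},
     tail = id(x := a) \<circ> tail G,
     head = id(x := a) \<circ> head G\<rparr>"

lemma contract_vertex_simps [simp]:
  "verts (contract_vertex G x a) = verts G - {x}"
  "arcs (contract_vertex G x a) = {e \<in> arcs G. (id(x := a)) (tail G e) \<noteq> (id(x := a)) (head G e)}"
  "tail (contract_vertex G x a) e = (id(x := a)) (tail G e)"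
  "head (contract_vertex G x a) e = (id(x := a)) (head G e)"
  unfolding contract_vertex_def by simp_all

lemma fin_digraph_contract_vertex:
  assumes "fin_digraph G" "a \<in> verts G" "a \<noteq> x"
  shows "fin_digraph (contract_vertex G x a)"
proof -
  interpret fin_digraph G by fact
  show ?thesis by unfold_locales (use assms(2,3) in auto)
qed

lemma cut_arcs_contract_vertex:
  assumes "x \<notin> U"
  shows "cut_arcs (contract_vertex G x a) U = cut_arcs G (if a \<in> U then insert x U else U)"
  using assms unfolding cut_arcs_def by auto

lemma two_edge_connected_contract_vertex:
  assumes "two_edge_connected G" "x \<in> verts G"
  shows "two_edge_connected (contract_vertex G x a)"
  unfolding two_edge_connected_def
proof (intro allI impI)
  fix U assume U: "U \<noteq> {} \<and> U \<subset> verts (contract_vertex G x a)"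
  let ?U = "if a \<in> U then insert x U else U"
  have "?U \<noteq> {}" "?U \<subset> verts G" using U assms(2) by auto
  then have "2 \<le> card (cut_arcs G ?U)" using assms(1) unfolding two_edge_connected_def by blast
  moreover have "x \<notin> U" using U by auto
  ultimately show "2 \<le> card (cut_arcs (contract_vertex G x a) U)"
    by (simp add: cut_arcs_contract_vertex)
qed

lemma out_cut_contract_vertex_reverse_arcs:
  assumes "B \<inter> arcs (contract_vertex G x a) = B'"
  shows "out_cut (contract_vertex (reverse_arcs G B) x a) W
    = out_cut (reverse_arcs (contract_vertex G x a) B') W"
  using assms unfolding out_cut_def by auto

section \<open>Strong orientations of 2-edge-connected multigraphs\<close>

text \<open>Strong connectivity, in its cut form.\<close>

definition out_cuts_nonempty :: "('a,'b) pre_digraph \<Rightarrow> bool" where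
  "out_cuts_nonempty G \<longleftrightarrow> (\<forall>W. W \<noteq> {} \<and> W \<subset> verts G \<longrightarrow> out_cut G W \<noteq> {})"

lemma out_cuts_nonemptyD:
  "out_cuts_nonempty G \<Longrightarrow> W \<noteq> {} \<Longrightarrow> W \<subset> verts G \<Longrightarrow> out_cut G W \<noteq> {}"
  unfolding out_cuts_nonempty_def by blast

definition strongly_orientable :: "('a,'b) pre_digraph \<Rightarrow> bool" where
  "strongly_orientable G \<longleftrightarrow> (\<exists>B \<subseteq> arcs G. out_cuts_nonempty (reverse_arcs G B))"

text \<open>
  The vertex x has exactly one in-arc and one out-arc, e1 and e2 in some order, and a is the
  other end of e1; contracting x into a suppresses x.
\<close>

locale suppressible_vertex = wf_digraph H for H :: "('a,'b) pre_digraph" +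
  fixes x a :: 'a and e1 e2 :: 'b
  assumes cut_vertex: "cut_arcs H {x} = {e1, e2}"
    and directed_path: "(tail H e1 = x) = (head H e2 = x)"
    and far_end: "a \<in> {tail H e1, head H e1}" "a \<noteq> x"
begin

lemma arcs_at_vertex:
  "e1 \<in> arcs H" "(tail H e1 = x) \<noteq> (head H e1 = x)"
  "e2 \<in> arcs H" "(tail H e2 = x) \<noteq> (head H e2 = x)"
  using cut_vertex unfolding cut_arcs_def by blast+

lemma far_end_in_verts: "a \<in> verts H"
  using far_end(1) arcs_at_vertex(1) by auto

lemma contract_arc_avoids_vertex:
  assumes "f \<in> arcs (contract_vertex H x a)" "f \<noteq> e2"
  shows "tail H f \<noteq> x \<and> head H f \<noteq> x"
proof -
  have "(id(x := a)) (tail H e1) = (id(x := a)) (head H e1)"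
    using far_end arcs_at_vertex(2) by auto
  then have "f \<noteq> e1" using assms(1) by auto
  with assms have "f \<notin> cut_arcs H {x}" using cut_vertex by auto
  then show ?thesis using assms(1) unfolding cut_arcs_def by auto
qed

context
  assumes contract_strong: "out_cuts_nonempty (contract_vertex H x a)"
begin

lemma contract_out_arc:
  assumes "W \<noteq> {}" "W \<subset> verts H - {x}"
  obtains f where "f \<in> arcs (contract_vertex H x a)"
    "(id(x := a)) (tail H f) \<in> W" "(id(x := a)) (head H f) \<notin> W"
proof -
  have "out_cut (contract_vertex H x a) W \<noteq> {}"
    using contract_strong assms unfolding out_cuts_nonempty_def by simp
  then show ?thesis using that unfolding out_cut_def by auto
qed

lemma out_cut_nonempty_same_side:
  assumes "W \<noteq> {}" "W \<subset> verts H" "(x \<in> W) = (a \<in> W)"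
  shows "out_cut H W \<noteq> {}"
proof -
  have "W - {x} \<noteq> {}" "W - {x} \<subset> verts H - {x}"
    using assms far_end(2) far_end_in_verts by auto
  then obtain f where "f \<in> arcs H"
      "(id(x := a)) (tail H f) \<in> W - {x}" "(id(x := a)) (head H f) \<notin> W - {x}"
    by (rule contract_out_arc) auto
  then show ?thesis using assms(3) far_end(2) unfolding out_cut_def by (auto split: if_splits)
qed

lemma out_cut_nonempty_vertex_inside:
  assumes "W \<subset> verts H" "x \<in> W" "a \<notin> W"
  shows "out_cut H W \<noteq> {}"
proof (cases "tail H e1 = x")
  case True
  then show ?thesis using assms far_end arcs_at_vertex(1) unfolding out_cut_def by auto
next
  case False
  then have tail_e2: "tail H e2 = x" using directed_path arcs_at_vertex(4) by auto
  show ?thesis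
  proof (cases "head H e2 \<in> W")
    case False
    then show ?thesis using assms(2) tail_e2 arcs_at_vertex(3) unfolding out_cut_def by auto
  next
    case True
    then have "W - {x} \<noteq> {}" "W - {x} \<subset> verts H - {x}"
      using assms tail_e2 arcs_at_vertex(4) far_end_in_verts by auto
    then obtain f where f: "f \<in> arcs (contract_vertex H x a)"
        "(id(x := a)) (tail H f) \<in> W - {x}" "(id(x := a)) (head H f) \<notin> W - {x}"
      by (rule contract_out_arc)
    then have "f \<noteq> e2" using tail_e2 assms(3) by auto
    then show ?thesis using f contract_arc_avoids_vertex[OF f(1)] unfolding out_cut_def by auto
  qed
qed

lemma out_cut_nonempty_vertex_outside:
  assumes "W \<noteq> {}" "W \<subset> verts H" "x \<notin> W" "a \<in> W"
  shows "out_cut H W \<noteq> {}"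
proof (cases "head H e1 = x")
  case True
  then show ?thesis using assms far_end arcs_at_vertex(1) unfolding out_cut_def by auto
next
  case False
  then have head_e2: "head H e2 = x" using directed_path arcs_at_vertex(2) by auto
  show ?thesis
  proof (cases "tail H e2 \<in> W")
    case True
    then show ?thesis using assms(3) head_e2 arcs_at_vertex(3) unfolding out_cut_def by auto
  next
    case False
    then have "W \<subset> verts H - {x}" using assms(2,3) head_e2 arcs_at_vertex(3,4) by auto
    then obtain f where f: "f \<in> arcs (contract_vertex H x a)"
        "(id(x := a)) (tail H f) \<in> W" "(id(x := a)) (head H f) \<notin> W"
      by (rule contract_out_arc[OF assms(1)])
    then have "f \<noteq> e2" using head_e2 assms(4) by auto
    then show ?thesis using f contract_arc_avoids_vertex[OF f(1)] unfolding out_cut_def by auto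
  qed
qed

lemma out_cuts_nonempty_if_contract: "out_cuts_nonempty H"
  unfolding out_cuts_nonempty_def
proof (intro allI impI)
  fix W assume "W \<noteq> {} \<and> W \<subset> verts H"
  then have nonempty: "W \<noteq> {}" and proper: "W \<subset> verts H" by blast+
  consider "(x \<in> W) = (a \<in> W)" | "x \<in> W" "a \<notin> W" | "x \<notin> W" "a \<in> W" by blast
  then show "out_cut H W \<noteq> {}"
  proof cases
    case 1
    then show ?thesis by (rule out_cut_nonempty_same_side[OF nonempty proper])
  next
    case 2
    then show ?thesis by (rule out_cut_nonempty_vertex_inside[OF proper])
  next
    case 3
    then show ?thesis by (rule out_cut_nonempty_vertex_outside[OF nonempty proper])
  qed
qed

end

end

lemma strongly_orientable_of_contract_vertex:
  assumes "wf_digraph G" and cut_x: "cut_arcs G {x} = {e1, e2}" "e1 \<noteq> e2"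
    and a: "a \<in> {tail G e1, head G e1}" "a \<noteq> x"
    and "strongly_orientable (contract_vertex G x a)"
  shows "strongly_orientable G"
proof -
  obtain B' where B': "B' \<subseteq> arcs (contract_vertex G x a)"
      "out_cuts_nonempty (reverse_arcs (contract_vertex G x a) B')"
    using assms(6) unfolding strongly_orientable_def by blast
  have e1: "e1 \<in> arcs G" "(tail G e1 = x) \<noteq> (head G e1 = x)"
    using cut_x(1) unfolding cut_arcs_def by blast+
  have e1_contracted: "e1 \<notin> arcs (contract_vertex G x a)" using e1(2) a by auto
  with B'(1) have "e1 \<notin> B'" by blast
  \<comment> \<open>Orient e1 so that e1 and e2 form a directed path through x.\<close>
  define B where "B = (if (tail G e1 = x) = (head (reverse_arcs G B') e2 = x) then B' else insert e1 B')"
  let ?H = "reverse_arcs G B"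
  have "B \<inter> arcs (contract_vertex G x a) = B'"
    using B'(1) e1_contracted unfolding B_def by (simp only: split: if_split) blast
  then have contract_strong: "out_cuts_nonempty (contract_vertex ?H x a)"
    using B'(2) out_cut_contract_vertex_reverse_arcs[of B G x a B']
    unfolding out_cuts_nonempty_def by simp
  have "suppressible_vertex ?H x a e1 e2"
  proof (intro suppressible_vertex.intro suppressible_vertex_axioms.intro)
    show "wf_digraph ?H" using assms(1) by (rule wf_digraph_reverse_arcs)
    show "cut_arcs ?H {x} = {e1, e2}" using cut_x(1) by simp
    show "(tail ?H e1 = x) = (head ?H e2 = x)"
      using e1(2) cut_x(2) \<open>e1 \<notin> B'\<close> unfolding B_def by auto
    show "a \<in> {tail ?H e1, head ?H e1}" "a \<noteq> x" using a by auto
  qed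
  then have "out_cuts_nonempty ?H"
    using contract_strong by (rule suppressible_vertex.out_cuts_nonempty_if_contract)
  moreover have "B \<subseteq> arcs G" using B'(1) e1(1) unfolding B_def by auto
  ultimately show ?thesis unfolding strongly_orientable_def by blast
qed

lemma tight_vertex_contraction:
  assumes "wf_digraph G" "tight_set G {x}"
  obtains a where "a \<in> verts G" "a \<noteq> x"
    "strongly_orientable (contract_vertex G x a) \<Longrightarrow> strongly_orientable G"
proof -
  obtain e1 e2 where cut_x: "cut_arcs G {x} = {e1, e2}" "e1 \<noteq> e2"
    using assms(2) unfolding tight_set_def by (auto simp: card_2_iff)
  define a where "a = (if tail G e1 = x then head G e1 else tail G e1)"
  have "e1 \<in> arcs G" "(tail G e1 = x) \<noteq> (head G e1 = x)"
    using cut_x(1) unfolding cut_arcs_def by blast+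
  then have a: "a \<in> {tail G e1, head G e1}" "a \<noteq> x" "a \<in> verts G"
    using wf_digraph.wellformed[OF assms(1)] unfolding a_def by auto
  show ?thesis
    using that[OF a(3,2)] strongly_orientable_of_contract_vertex[OF assms(1) cut_x a(1,2)] by blast
qed

lemma strongly_orientable_if_card_verts_le_1:
  assumes "finite (verts G)" "card (verts G) \<le> 1"
  shows "strongly_orientable G"
proof -
  have "out_cuts_nonempty (reverse_arcs G {})"
    unfolding out_cuts_nonempty_def
  proof (intro allI impI)
    fix W assume "W \<noteq> {} \<and> W \<subset> verts (reverse_arcs G {})"
    then have "0 < card W" "card W < card (verts G)"
      using assms(1) by (auto intro: psubset_card_mono simp: card_gt_0_iff finite_subset)
    with assms(2) show "out_cut (reverse_arcs G {}) W \<noteq> {}" by linarith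
  qed
  then show ?thesis unfolding strongly_orientable_def by blast
qed

lemma strongly_orientable_of_del_arc:
  assumes "strongly_orientable (pre_digraph.del_arc G e)"
  shows "strongly_orientable G"
proof -
  obtain B where B: "B \<subseteq> arcs G - {e}" "out_cuts_nonempty (reverse_arcs (pre_digraph.del_arc G e) B)"
    using assms unfolding strongly_orientable_def pre_digraph.del_arc_def by auto
  have "out_cuts_nonempty (reverse_arcs G B)"
    unfolding out_cuts_nonempty_def
  proof (intro allI impI)
    fix W assume "W \<noteq> {} \<and> W \<subset> verts (reverse_arcs G B)"
    then have "out_cut (reverse_arcs (pre_digraph.del_arc G e) B) W \<noteq> {}"
      using B(2) unfolding out_cuts_nonempty_def by (simp add: pre_digraph.del_arc_def)
    moreover have "out_cut (reverse_arcs (pre_digraph.del_arc G e) B) W \<subseteq> out_cut (reverse_arcs G B) W"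
      unfolding out_cut_def pre_digraph.del_arc_def by auto
    ultimately show "out_cut (reverse_arcs G B) W \<noteq> {}" by blast
  qed
  with B(1) show ?thesis unfolding strongly_orientable_def by blast
qed

theorem two_edge_connected_imp_strongly_orientable:
  assumes "fin_digraph G" "two_edge_connected G"
  shows "strongly_orientable G"
  using assms
proof (induction "card (verts G) + card (arcs G)" arbitrary: G rule: less_induct)
  case less
  interpret fin_digraph G by fact
  show ?case
  proof (cases "\<exists>e \<in> arcs G. two_edge_connected (del_arc e)")
    case True
    then obtain e where e: "e \<in> arcs G" "two_edge_connected (del_arc e)" by blast
    have "card (arcs (del_arc e)) < card (arcs G)"
      using card_Diff1_less[OF finite_arcs e(1)] by simp
    then have "strongly_orientable (del_arc e)"
      using less.hyps[OF _ fin_digraph_del_arc e(2)] by simp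
    then show ?thesis by (rule strongly_orientable_of_del_arc)
  next
    case no_removable_arc: False
    show ?thesis
    proof (cases "card (verts G) \<le> 1")
      case True
      then show ?thesis by (simp add: strongly_orientable_if_card_verts_le_1)
    next
      case False
      have "\<forall>e \<in> arcs G. \<exists>X. tight_set G X \<and> e \<in> cut_arcs G X"
        using tight_set_through_arc[OF finite_arcs less.prems(2)] no_removable_arc by blast
      moreover have "2 \<le> card (verts G)" using False by linarith
      ultimately obtain x where x: "tight_set G {x}"
        using tight_set_singleton_if_tight_cuts_cover less.prems by blast
      obtain a where a: "a \<in> verts G" "a \<noteq> x"
        and lift: "strongly_orientable (contract_vertex G x a) \<Longrightarrow> strongly_orientable G"
        using tight_vertex_contraction[OF wf_digraph x] by blast
      have x_verts: "x \<in> verts G" using x unfolding tight_set_def by auto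
      have "card (verts (contract_vertex G x a)) < card (verts G)"
        using card_Diff1_less[OF finite_verts x_verts] by simp
      moreover have "card (arcs (contract_vertex G x a)) \<le> card (arcs G)"
        by (rule card_mono) auto
      ultimately have "strongly_orientable (contract_vertex G x a)"
        using less.hyps fin_digraph_contract_vertex[OF less.prems(1) a]
          two_edge_connected_contract_vertex[OF less.prems(2) x_verts] by simp
      then show ?thesis by (rule lift)
    qed
  qed
qed

section \<open>Dijoins\<close>

lemma is_dicutI:
  assumes "U \<noteq> {}" "U \<subset> verts G" "\<forall>e \<in> arcs G. \<not> (tail G e \<notin> U \<and> head G e \<in> U)"
  shows "is_dicut G (out_cut G U)"
  unfolding is_dicut_def using assms by blast

lemma two_edge_connected_if_dicuts_ge_2:
  assumes "fin_digraph G" and dicut: "\<And>C. is_dicut G C \<Longrightarrow> 2 \<le> card C"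
  shows "two_edge_connected G"
  unfolding two_edge_connected_def
proof (intro allI impI)
  interpret fin_digraph G by fact
  fix U assume U: "U \<noteq> {} \<and> U \<subset> verts G"
  have fin: "finite (cut_arcs G U)" by (simp add: finite_cut_arcs)
  show "2 \<le> card (cut_arcs G U)"
  proof (rule ccontr)
    assume small: "\<not> 2 \<le> card (cut_arcs G U)"
    obtain W where W: "is_dicut G (out_cut G W)" "out_cut G W \<subseteq> cut_arcs G U"
    proof (cases "\<exists>f \<in> arcs G. tail G f \<notin> U \<and> head G f \<in> U")
      case False
      then have "is_dicut G (out_cut G U)" using U by (intro is_dicutI) auto
      then show ?thesis using out_cut_subset_cut_arcs by (rule that)
    next
      case True
      then obtain f where f: "f \<in> cut_arcs G U" "tail G f \<notin> U"
        unfolding cut_arcs_def by auto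
      have "card (cut_arcs G U) \<le> Suc 0" using small by simp
      then have "\<forall>g \<in> cut_arcs G U. \<forall>h \<in> cut_arcs G U. g = h"
        by (simp only: card_le_Suc0_iff_eq[OF fin])
      then have only_f: "g = f" if "g \<in> cut_arcs G U" for g
        using f(1) that by blast
      have "\<not> (tail G g \<notin> verts G - U \<and> head G g \<in> verts G - U)" if "g \<in> arcs G" for g
      proof
        assume "tail G g \<notin> verts G - U \<and> head G g \<in> verts G - U"
        then have "tail G g \<in> U" "head G g \<notin> U" using that by auto
        then have "g \<in> cut_arcs G U" using that unfolding cut_arcs_def by auto
        then have "g = f" by (rule only_f)
        with \<open>tail G g \<in> U\<close> f(2) show False by simp
      qed
      moreover have "verts G - U \<noteq> {}" "verts G - U \<subset> verts G" using U by auto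
      ultimately have "is_dicut G (out_cut G (verts G - U))" by (intro is_dicutI) auto
      moreover have "out_cut G (verts G - U) \<subseteq> cut_arcs G U"
        unfolding out_cut_def cut_arcs_def by auto
      ultimately show ?thesis by (rule that)
    qed
    from W(1) have "2 \<le> card (out_cut G W)" by (rule dicut)
    also have "\<dots> \<le> card (cut_arcs G U)" using fin W(2) by (rule card_mono)
    finally show False using small by simp
  qed
qed

lemma dijoins_of_strong_orientation:
  assumes "wf_digraph G" "B \<subseteq> arcs G" "out_cuts_nonempty (reverse_arcs G B)"
  shows "is_dijoin G B" "is_dijoin G (arcs G - B)"
proof -
  have "B \<inter> C \<noteq> {} \<and> (arcs G - B) \<inter> C \<noteq> {}" if "is_dicut G C" for C
  proof -
    obtain U where U: "U \<noteq> {}" "U \<subset> verts G" and C: "C = out_cut G U"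
      and closed: "\<forall>e \<in> arcs G. \<not> (tail G e \<notin> U \<and> head G e \<in> U)"
      using \<open>is_dicut G C\<close> unfolding is_dicut_def by blast
    have no_in_arc: "out_cut G (verts G - U) = {}"
      using closed wf_digraph.head_in_verts[OF assms(1)] unfolding out_cut_def by blast
    have "C - B \<noteq> {}"
    proof -
      have "out_cut (reverse_arcs G B) U \<noteq> {}"
        using out_cuts_nonemptyD[OF assms(3)] U by simp
      then show ?thesis unfolding out_cut_reverse_arcs[OF assms(1)] no_in_arc C by simp
    qed
    moreover have "B \<inter> C \<noteq> {}"
    proof -
      have "verts G - U \<noteq> {}" "verts G - U \<subset> verts G" using U by auto
      then have "out_cut (reverse_arcs G B) (verts G - U) \<noteq> {}"
        using out_cuts_nonemptyD[OF assms(3)] by simp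
      moreover have "verts G - (verts G - U) = U" using U(2) by blast
      ultimately show ?thesis unfolding out_cut_reverse_arcs[OF assms(1)] no_in_arc C by simp
    qed
    moreover have "C \<subseteq> arcs G" unfolding C out_cut_def by blast
    ultimately show ?thesis by blast
  qed
  then show "is_dijoin G B" "is_dijoin G (arcs G - B)"
    using assms(2) unfolding is_dijoin_def by auto
qed

theorem corollary1:
  fixes G :: "('a,'b) pre_digraph"
  assumes "fin_digraph G" and "loopfree_digraph G"
    and "min_dicut_size G 2"
  shows "\<exists>J1 J2. is_dijoin G J1 \<and> is_dijoin G J2 \<and> J1 \<inter> J2 = {}"
  \<comment> \<open>Loops lie in no cut.\<close>
proof -
  have "two_edge_connected G"
    using two_edge_connected_if_dicuts_ge_2 assms(1,3) unfolding min_dicut_size_def by blast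
  then obtain B where "B \<subseteq> arcs G" "out_cuts_nonempty (reverse_arcs G B)"
    using two_edge_connected_imp_strongly_orientable assms(1) unfolding strongly_orientable_def by blast
  then have "is_dijoin G B" "is_dijoin G (arcs G - B)"
    using dijoins_of_strong_orientation fin_digraph.axioms(1)[OF assms(1)] by blast+
  then show ?thesis by blast
qed

end
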